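(* Let $\mathrm{Spin}(7)$ act on the unit sphere $S^7\subset\mathbb{O}$ by $(A,B,B)\cdot x=B(x)$, so that $S^7=\mathrm{Spin}(7)/G_2$ with $G_2$ the isotropy group of $1$. Let $F$ be a $\mathrm{Spin}(7)$-invariant Finsler metric on $S^7$. If some nonzero $X\in\mathrm{Lie}(\mathrm{Spin}(7))$ generates a Killing vector field of constant length for $F$, then $F$ is a symmetric Riemannian metric; more precisely, $F$ is a positive constant multiple of the standard round Riemannian metric on $S^7$.
   Context: $\mathbb{O}$ denotes the Cayley numbers, $\mathbb{O}=\mathbb{H}\oplus\mathbb{H}$ with product $(q_1,q_2)(s_1,s_2)=(q_1s_1-\overline{s_2}q_2,\ s_2q_1+q_2\overline{s_1})$, conjugation $\overline{(q_1,q_2)}=(\overline{q_1},-q_2)$ and inner product $\langle x,y\rangle=\mathrm{Re}(\overline{x}y)$, $\mathrm{Re}(q_1,q_2)=\mathrm{Re}(q_1)$. A triality triple is $(A,B,C)\in\mathrm{SO}(8)^3$ with $A(x)B(y)=C(xy)$ for all $x,y$; these form $\mathrm{Spin}(8)$. $\mathrm{Spin}(7)$ is the subgroup of triples with $B=C$ (equivalently $A(1)=1$), and $G_2$ the subgroup with $A=B=C$ (automorphisms of $\mathbb{O}$). A Killing vector field of constant length is a Killing field $X$ with $F(X_p)$ independent of $p$. Finsler metric: continuous $F:TM\to[0,\infty)$, smooth off the zero section, positive, positively $1$-homogeneous, with positive definite fiberwise Hessian of $F^2/2$. *)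

theory Defs
  imports "HOL-Analysis.Analysis"
begin

definition qmul :: "real^4 \<Rightarrow> real^4 \<Rightarrow> real^4" where
  "qmul p q = vector
     [p$1*q$1 - p$2*q$2 - p$3*q$3 - p$4*q$4,
      p$1*q$2 + p$2*q$1 + p$3*q$4 - p$4*q$3,
      p$1*q$3 - p$2*q$4 + p$3*q$1 + p$4*q$2,
      p$1*q$4 + p$2*q$3 - p$3*q$2 + p$4*q$1]"

definition qconj :: "real^4 \<Rightarrow> real^4" where
  "qconj q = vector [q$1, - q$2, - q$3, - q$4]"

text \<open>O = H \<oplus> H, stored as real^8: coordinates 1..4 are q1, coordinates 5..8 are q2.\<close>

definition ofst :: "real^8 \<Rightarrow> real^4" where
  "ofst x = vector [x$1, x$2, x$3, x$4]"

definition osnd :: "real^8 \<Rightarrow> real^4" where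
  "osnd x = vector [x$5, x$6, x$7, x$8]"

definition ojoin :: "real^4 \<Rightarrow> real^4 \<Rightarrow> real^8" where
  "ojoin q r = vector [q$1, q$2, q$3, q$4, r$1, r$2, r$3, r$4]"

text \<open>(q1,q2)(s1,s2) = (q1 s1 - conj(s2) q2, s2 q1 + q2 conj(s1)).
  The inner product Re(conj x y) is the standard inner product of real^8.\<close>
definition omul :: "real^8 \<Rightarrow> real^8 \<Rightarrow> real^8" where
  "omul x y = ojoin (qmul (ofst x) (ofst y) - qmul (qconj (osnd y)) (osnd x))
                    (qmul (osnd y) (ofst x) + qmul (osnd x) (qconj (ofst y)))"

definition SO8 :: "(real^8 \<Rightarrow> real^8) set" where
  "SO8 = {A. orthogonal_transformation A \<and> det (matrix A) = 1}"

type_synonym triple = "(real^8 \<Rightarrow> real^8) \<times> (real^8 \<Rightarrow> real^8) \<times> (real^8 \<Rightarrow> real^8)"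

definition Spin8 :: "triple set" where
  "Spin8 = {(A,B,C). A \<in> SO8 \<and> B \<in> SO8 \<and> C \<in> SO8 \<and>
                      (\<forall>x y. omul (A x) (B y) = C (omul x y))}"

definition Spin7 :: "triple set" where
  "Spin7 = {(A,B,C). (A,B,C) \<in> Spin8 \<and> B = C}"

definition spin7_act :: "triple \<Rightarrow> real^8 \<Rightarrow> real^8" where
  "spin7_act g x = fst (snd g) x"

definition tcomp :: "triple \<Rightarrow> triple \<Rightarrow> triple" where
  "tcomp g h = (case g of (A,B,C) \<Rightarrow> case h of (A',B',C') \<Rightarrow> (A \<circ> A', B \<circ> B', C \<circ> C'))"

definition Lie_Spin7 :: "triple set" where
  "Lie_Spin7 = {(XA,XB,XC). \<exists>\<phi> :: real \<Rightarrow> triple.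
      (\<forall>t. \<phi> t \<in> Spin7) \<and> \<phi> 0 = (id, id, id) \<and>
      (\<forall>s t. \<phi> (s + t) = tcomp (\<phi> s) (\<phi> t)) \<and>
      (\<forall>v. ((\<lambda>t. fst (\<phi> t) v) has_vector_derivative XA v) (at 0)) \<and>
      (\<forall>v. ((\<lambda>t. fst (snd (\<phi> t)) v) has_vector_derivative XB v) (at 0)) \<and>
      (\<forall>v. ((\<lambda>t. snd (snd (\<phi> t)) v) has_vector_derivative XC v) (at 0))}"

text \<open>The vector field on S^7 generated by X: p |-> d/dt|0 (exp(tX) . p) = XB p.\<close>
definition fundamental_field :: "triple \<Rightarrow> real^8 \<Rightarrow> real^8" where
  "fundamental_field X p = fst (snd X) p"

definition S7 :: "(real^8) set" where
  "S7 = {p. norm p = 1}"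

definition TS7 :: "((real^8) \<times> (real^8)) set" where
  "TS7 = {(p,v). p \<in> S7 \<and> inner p v = 0}"

definition TS7_nz :: "((real^8) \<times> (real^8)) set" where
  "TS7_nz = {(p,v). (p,v) \<in> TS7 \<and> v \<noteq> 0}"

fun Ck_on :: "nat \<Rightarrow> 'a::euclidean_space set \<Rightarrow> ('a \<Rightarrow> real) \<Rightarrow> bool" where
  "Ck_on 0 U f = continuous_on U f"
| "Ck_on (Suc k) U f = (f differentiable_on U \<and>
      (\<forall>v. Ck_on k U (\<lambda>x. frechet_derivative f (at x) v)))"

definition Cinf_on :: "'a::euclidean_space set \<Rightarrow> ('a \<Rightarrow> real) \<Rightarrow> bool" where
  "Cinf_on U f = (\<forall>k. Ck_on k U f)"

text \<open>Finsler metric on S^7 (F p v = F(v) for v in T_p S^7). Smoothness off the zero section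
  of the embedded submanifold TS^7 \<subseteq> R^8 x R^8 means: F is the restriction of a C^\<infinity>
  function on an open neighbourhood. Positive definiteness of the fibrewise Hessian of F^2/2
  at v is expressed through its quadratic form w |-> d^2/dt^2|0 F(p,v+tw)^2/2 on T_p S^7.\<close>
definition finsler_S7 :: "(real^8 \<Rightarrow> real^8 \<Rightarrow> real) \<Rightarrow> bool" where
  "finsler_S7 F \<longleftrightarrow>
     continuous_on TS7 (\<lambda>(p,v). F p v) \<and>
     (\<forall>(p,v)\<in>TS7. F p v \<ge> 0) \<and>
     (\<exists>U G. open U \<and> TS7_nz \<subseteq> U \<and> Cinf_on U G \<and> (\<forall>(p,v)\<in>TS7_nz. G (p,v) = F p v)) \<and>
     (\<forall>(p,v)\<in>TS7_nz. F p v > 0) \<and>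
     (\<forall>(p,v)\<in>TS7. \<forall>r>0. F p (r *\<^sub>R v) = r * F p v) \<and>
     (\<forall>(p,v)\<in>TS7_nz. \<forall>w. (p,w) \<in> TS7 \<and> w \<noteq> 0 \<longrightarrow>
         deriv (deriv (\<lambda>t. (F p (v + t *\<^sub>R w))\<^sup>2 / 2)) 0 > 0)"

definition spin7_invariant :: "(real^8 \<Rightarrow> real^8 \<Rightarrow> real) \<Rightarrow> bool" where
  "spin7_invariant F \<longleftrightarrow>
     (\<forall>g\<in>Spin7. \<forall>(p,v)\<in>TS7. F (spin7_act g p) (spin7_act g v) = F p v)"

definition killing_const_length ::
    "(real^8 \<Rightarrow> real^8 \<Rightarrow> real) \<Rightarrow> (real^8 \<Rightarrow> real^8) \<Rightarrow> bool" where
  "killing_const_length F K \<longleftrightarrow> (\<exists>c. \<forall>p\<in>S7. F p (K p) = c)"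

end

theory Submission
  imports Defs
begin

text \<open>Hence an invariant F is constant on unit tangent vectors, and positive
  homogeneity makes it a multiple of the round norm.
  The group elements used are explicit: for orthonormal imaginary u, w the map
  B = cos t + sin t L_u L_w is an isoclinic rotation, and together with the rotation A by the
  angle 2t in the (u,w)-plane it satisfies the triality relation A(x) B(y) = B(xy).\<close>

lemma exhaust_8:
  fixes x :: 8
  shows "x = 1 \<or> x = 2 \<or> x = 3 \<or> x = 4 \<or> x = 5 \<or> x = 6 \<or> x = 7 \<or> x = 8"
proof (induct x)
  case (of_int z)
  then have "z = 0 \<or> z = 1 \<or> z = 2 \<or> z = 3 \<or> z = 4 \<or> z = 5 \<or> z = 6 \<or> z = 7" by fastforce
  then show ?case by auto
qed

lemma forall_8: "(\<forall>i::8. P i) \<longleftrightarrow> P 1 \<and> P 2 \<and> P 3 \<and> P 4 \<and> P 5 \<and> P 6 \<and> P 7 \<and> P 8"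
  by (metis exhaust_8)

lemma UNIV_8: "UNIV = {1, 2, 3, 4, 5, 6, 7, 8::8}"
  using exhaust_8 by auto

lemma sum_8: "sum f (UNIV::8 set) = f 1 + f 2 + f 3 + f 4 + f 5 + f 6 + f 7 + f 8"
  unfolding UNIV_8 by (simp add: ac_simps)

lemma vector_4 [simp]:
  "(vector [a, b, c, d] :: 'a::zero^4) $ 1 = a"
  "(vector [a, b, c, d] :: 'a::zero^4) $ 2 = b"
  "(vector [a, b, c, d] :: 'a::zero^4) $ 3 = c"
  "(vector [a, b, c, d] :: 'a::zero^4) $ 4 = d"
  unfolding vector_def by simp_all

lemma vector_8 [simp]:
  "(vector [a, b, c, d, e, f, g, h] :: 'a::zero^8) $ 1 = a"
  "(vector [a, b, c, d, e, f, g, h] :: 'a::zero^8) $ 2 = b"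
  "(vector [a, b, c, d, e, f, g, h] :: 'a::zero^8) $ 3 = c"
  "(vector [a, b, c, d, e, f, g, h] :: 'a::zero^8) $ 4 = d"
  "(vector [a, b, c, d, e, f, g, h] :: 'a::zero^8) $ 5 = e"
  "(vector [a, b, c, d, e, f, g, h] :: 'a::zero^8) $ 6 = f"
  "(vector [a, b, c, d, e, f, g, h] :: 'a::zero^8) $ 7 = g"
  "(vector [a, b, c, d, e, f, g, h] :: 'a::zero^8) $ 8 = h"
  unfolding vector_def by simp_all

lemma inner_real8:
  "inner (x::real^8) y =
     x$1*y$1 + x$2*y$2 + x$3*y$3 + x$4*y$4 + x$5*y$5 + x$6*y$6 + x$7*y$7 + x$8*y$8"
  by (simp add: inner_vec_def sum_8)

lemma vec8_eq_iff:
  "(x::'a^8) = y \<longleftrightarrow>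
     x$1 = y$1 \<and> x$2 = y$2 \<and> x$3 = y$3 \<and> x$4 = y$4 \<and> x$5 = y$5 \<and> x$6 = y$6 \<and> x$7 = y$7 \<and> x$8 = y$8"
  by (simp add: vec_eq_iff forall_8)

lemma ex_unit_orthogonal:
  fixes S :: "'a::euclidean_space set"
  assumes "finite S" "card S < DIM('a)"
  obtains z where "norm z = 1" "\<And>s. s \<in> S \<Longrightarrow> inner z s = 0"
proof -
  have "dim S < DIM('a)" using dim_le_card' assms by (meson le_less_trans)
  then obtain x where "x \<noteq> 0" "\<And>y. y \<in> span S \<Longrightarrow> orthogonal x y"
    using orthogonal_to_subspace_exists by blast
  then show ?thesis
    using that[of "x /\<^sub>R norm x"] by (simp add: orthogonal_def span_base)
qed

lemma unit_vector_decompose: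
  fixes x y c :: "'a::euclidean_space"
  assumes "DIM('a) > 2" "norm x = 1" "norm y = 1" "inner x c = 0" "inner y c = 0"
  obtains w t where "norm w = 1" "inner w y = 0" "inner w c = 0" "x = cos t *\<^sub>R y + sin t *\<^sub>R w"
proof -
  define a where "a = inner x y"
  define r where "r = x - a *\<^sub>R y"
  have a_bound: "-1 \<le> a" "a \<le> 1"
    using Cauchy_Schwarz_ineq2[of x y] assms(2,3) by (auto simp: a_def abs_le_iff)
  have "inner r r = inner x x - 2 * a * inner x y + a\<^sup>2 * inner y y"
    by (simp add: r_def inner_diff inner_commute[of y x] power2_eq_square algebra_simps)
  also have "\<dots> = 1 - a\<^sup>2"
    using assms(2,3) by (simp add: a_def dot_square_norm power2_eq_square)
  finally have "inner r r = 1 - a\<^sup>2" .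
  then have norm_r: "norm r = sin (arccos a)"
    using a_bound by (simp add: norm_eq_sqrt_inner sin_arccos)
  have "inner r y = 0" "inner r c = 0"
    using assms by (simp_all add: r_def a_def inner_diff_left dot_square_norm)
  obtain w where w: "norm w = 1" "inner w y = 0" "inner w c = 0" "r = norm r *\<^sub>R w"
  proof (cases "r = 0")
    case True
    obtain z where "norm z = 1" "\<And>s. s \<in> {y, c} \<Longrightarrow> inner z s = 0"
      by (rule ex_unit_orthogonal[of "{y, c}"]) (use assms(1) in \<open>auto simp: card_insert_if\<close>)
    then show ?thesis using that[of z] True by simp
  next
    case False
    then show ?thesis
      using that[of "r /\<^sub>R norm r"] \<open>inner r y = 0\<close> \<open>inner r c = 0\<close> by simp
  qed
  have "x = a *\<^sub>R y + r" by (simp add: r_def)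
  also have "\<dots> = cos (arccos a) *\<^sub>R y + sin (arccos a) *\<^sub>R w"
    using w(4) a_bound by (simp add: norm_r cos_arccos)
  finally show ?thesis using that w(1-3) by blast
qed

lemma cos_sin_double_minus:
  fixes t :: real
  shows "cos (2 * t) * cos t + sin (2 * t) * sin t = cos t"
    "sin (2 * t) * cos t - cos (2 * t) * sin t = sin t"
  using cos_diff[of "2 * t" t] sin_diff[of "2 * t" t] by simp_all

lemma det_matrix_compose_self_orthogonal:
  fixes g :: "real^'n \<Rightarrow> real^'n"
  assumes "orthogonal_transformation g"
  shows "det (matrix (g \<circ> g)) = 1"
proof -
  have "linear g" using assms orthogonal_transformation_linear by blast
  then have "det (matrix (g \<circ> g)) = \<bar>det (matrix g)\<bar> * \<bar>det (matrix g)\<bar>"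
    by (simp add: matrix_compose det_mul abs_mult_self_eq)
  then show ?thesis using orthogonal_transformation_det[OF assms] by simp
qed

abbreviation oone :: "real^8" where "oone \<equiv> axis 1 1"

lemma inner_oone [simp]: "inner a oone = a$1" "inner oone a = a$1"
  by (simp_all add: inner_axis inner_axis')

lemmas octonion_defs = omul_def ojoin_def qmul_def qconj_def ofst_def osnd_def

lemma omul_oone [simp]: "omul oone y = y" "omul y oone = y"
  unfolding vec8_eq_iff by (simp_all add: octonion_defs axis_def)

lemma linear_omul_left: "linear (\<lambda>a. omul a y)"
  by (rule linearI) (simp_all add: vec8_eq_iff octonion_defs algebra_simps)

lemma linear_omul_right: "linear (omul a)"
  by (rule linearI) (simp_all add: vec8_eq_iff octonion_defs algebra_simps)

lemmas omul_add_left = linear_add[OF linear_omul_left]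
  and omul_add_right = linear_add[OF linear_omul_right]
  and omul_scaleR_left = linear_scale[OF linear_omul_left]
  and omul_scaleR_right = linear_scale[OF linear_omul_right]
  and omul_minus_left = linear_neg[OF linear_omul_left]
  and omul_minus_right = linear_neg[OF linear_omul_right]
  and omul_diff_left = linear_diff[OF linear_omul_left]
  and omul_diff_right = linear_diff[OF linear_omul_right]

lemma omul_zero [simp]: "omul 0 y = 0" "omul y 0 = 0"
  using linear_0[OF linear_omul_left] linear_0[OF linear_omul_right] by auto

lemmas omul_linear_simps =
  omul_add_left omul_add_right omul_scaleR_left omul_scaleR_right
  omul_minus_left omul_minus_right omul_diff_left omul_diff_right

text \<open>In the identities below a$1 is the real part of a.\<close>

lemma omul_left_alternative:
  "omul a (omul b y) + omul b (omul a y) = omul (omul a b + omul b a) y"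
  unfolding vec8_eq_iff by (simp add: octonion_defs algebra_simps)

lemma omul_right_alternative: "omul (omul y a) a = omul y (omul a a)"
  unfolding vec8_eq_iff by (simp add: octonion_defs algebra_simps)

lemma inner_omul_left:
  "inner (omul a y) z + inner y (omul a z) = 2 * a$1 * inner y z"
  unfolding inner_real8 by (simp add: octonion_defs algebra_simps)

lemma inner_omul_self: "inner (omul a b) (omul a b) = inner a a * inner b b"
  unfolding inner_real8 by (simp add: octonion_defs algebra_simps)

lemma omul_anticommutator:
  "omul a b + omul b a = (2 * a$1) *\<^sub>R b + (2 * b$1) *\<^sub>R a - (2 * inner a b) *\<^sub>R oone"
  unfolding vec8_eq_iff inner_real8 by (simp add: octonion_defs axis_def algebra_simps)

lemma norm_omul: "norm (omul a b) = norm a * norm b"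
  by (simp add: norm_eq_sqrt_inner inner_omul_self real_sqrt_mult)

lemma omul_anticommute:
  assumes "a$1 = 0" "b$1 = 0" "inner a b = 0"
  shows "omul a b = - omul b a"
  using omul_anticommutator[of a b] assms by (simp add: eq_neg_iff_add_eq_0)

lemma omul_omul_anticommute:
  assumes "a$1 = 0" "b$1 = 0" "inner a b = 0"
  shows "omul a (omul b y) = - omul b (omul a y)"
  using omul_left_alternative[of a b y] omul_anticommute[OF assms]
  by (simp add: eq_neg_iff_add_eq_0)

lemma omul_self_imaginary:
  assumes "a$1 = 0" "inner a a = 1"
  shows "omul a a = - oone"
proof -
  have "2 *\<^sub>R omul a a = 2 *\<^sub>R (- oone)"
    using omul_anticommutator[of a a] assms by (simp add: scaleR_2[symmetric])
  then show ?thesis by (metis scaleR_cancel_left zero_neq_numeral)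
qed

lemma omul_omul_self_imaginary:
  assumes "a$1 = 0" "inner a a = 1"
  shows "omul a (omul a y) = - y"
proof -
  have "2 *\<^sub>R omul a (omul a y) = 2 *\<^sub>R (- y)"
    using omul_left_alternative[of a a y] omul_self_imaginary[OF assms]
    by (simp add: scaleR_2[symmetric] omul_linear_simps)
  then show ?thesis by (metis scaleR_cancel_left zero_neq_numeral)
qed

lemma omul_omul_self_imaginary_right:
  assumes "a$1 = 0" "inner a a = 1"
  shows "omul (omul y a) a = - y"
  using omul_right_alternative[of y a] omul_self_imaginary[OF assms] by (simp add: omul_linear_simps)

lemma inner_omul_imaginary:
  assumes "a$1 = 0"
  shows "inner (omul a y) z = - inner y (omul a z)"
  using inner_omul_left[of a y z] assms by simp

lemma inner_omul_imaginary_self: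
  assumes "a$1 = 0"
  shows "inner (omul a y) y = 0"
  using inner_omul_imaginary[OF assms, of y y] by (simp add: inner_commute)

lemma inner_omul_unit_imaginary:
  assumes "a$1 = 0" "inner a a = 1"
  shows "inner (omul a y) (omul a y) = inner y y"
  using inner_omul_self[of a y] assms by simp

definition imag_orthonormal :: "real^8 \<Rightarrow> real^8 \<Rightarrow> bool" where
  "imag_orthonormal u w \<longleftrightarrow>
     u$1 = 0 \<and> w$1 = 0 \<and> inner u u = 1 \<and> inner w w = 1 \<and> inner u w = 0"

lemma imag_orthonormalD:
  assumes "imag_orthonormal u w"
  shows "u$1 = 0" "w$1 = 0" "inner u u = 1" "inner w w = 1" "inner u w = 0" "inner w u = 0"
  using assms by (auto simp: imag_orthonormal_def inner_commute)

lemma omul_imaginary_real_part: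
  assumes "a$1 = 0" "inner a b = 0"
  shows "(omul a b)$1 = 0"
  using inner_omul_imaginary[OF assms(1), of b oone] assms(2) by (simp add: inner_commute)

lemma imag_orthonormal_factor:
  assumes "q$1 = 0" "inner q q = 1" "z$1 = 0" "inner z z = 1" "inner z q = 0"
  shows "imag_orthonormal (- omul q z) z" "omul (- omul q z) (omul z oone) = q"
proof -
  have "(omul q z)$1 = 0" using omul_imaginary_real_part assms(1,5) by (simp add: inner_commute)
  then show "imag_orthonormal (- omul q z) z"
    using assms inner_omul_unit_imaginary[OF assms(1,2)] inner_omul_imaginary_self[OF assms(1)]
    by (simp add: imag_orthonormal_def)
  show "omul (- omul q z) (omul z oone) = q"
    using omul_omul_self_imaginary_right[OF assms(3,4)] by (simp add: omul_linear_simps)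
qed

definition lmul_lmul :: "real^8 \<Rightarrow> real^8 \<Rightarrow> real^8 \<Rightarrow> real^8" where
  "lmul_lmul u w y = omul u (omul w y)"

lemma linear_lmul_lmul: "linear (lmul_lmul u w)"
  unfolding lmul_lmul_def by (intro linear_compose[OF linear_omul_right linear_omul_right, unfolded o_def])

lemmas lmul_lmul_add = linear_add[OF linear_lmul_lmul]
  and lmul_lmul_scaleR = linear_scale[OF linear_lmul_lmul]
  and lmul_lmul_minus = linear_neg[OF linear_lmul_lmul]
  and lmul_lmul_diff = linear_diff[OF linear_lmul_lmul]

lemmas lmul_lmul_linear_simps = lmul_lmul_add lmul_lmul_scaleR lmul_lmul_minus lmul_lmul_diff

context
  fixes u w :: "real^8"
  assumes uw: "imag_orthonormal u w"
begin

lemma lmul_lmul_lmul_lmul: "lmul_lmul u w (lmul_lmul u w y) = - y"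
proof -
  note on = imag_orthonormalD[OF uw]
  have "lmul_lmul u w (lmul_lmul u w y) = omul u (- omul u (omul w (omul w y)))"
    using omul_omul_anticommute[OF on(2,1,6)] by (simp add: lmul_lmul_def)
  also have "\<dots> = - y"
    using omul_omul_self_imaginary[OF on(1,3)] omul_omul_self_imaginary[OF on(2,4)]
    by (simp add: omul_linear_simps)
  finally show ?thesis .
qed

lemma inner_lmul_lmul_self: "inner y (lmul_lmul u w y) = 0"
proof -
  note on = imag_orthonormalD[OF uw]
  have "inner y (lmul_lmul u w y) = - inner (omul u y) (omul w y)"
    using inner_omul_imaginary[OF on(1), of y "omul w y"] by (simp add: lmul_lmul_def)
  moreover have "inner y (lmul_lmul u w y) = inner (omul w y) (omul u y)"
    using omul_omul_anticommute[OF on(1,2,5)] inner_omul_imaginary[OF on(2), of y "omul u y"]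
    by (simp add: lmul_lmul_def)
  ultimately show ?thesis by (simp add: inner_commute)
qed

lemma inner_lmul_lmul: "inner (lmul_lmul u w y) (lmul_lmul u w y) = inner y y"
  using imag_orthonormalD[OF uw] by (simp add: lmul_lmul_def inner_omul_unit_imaginary)

lemma lmul_lmul_u: "lmul_lmul u w u = w"
  using imag_orthonormalD[OF uw] omul_anticommute[of w u] omul_omul_self_imaginary[of u]
  by (simp add: lmul_lmul_def omul_linear_simps)

lemma omul_u_lmul_lmul: "omul u (lmul_lmul u w y) = - omul w y"
  using imag_orthonormalD[OF uw] by (simp add: lmul_lmul_def omul_omul_self_imaginary)

lemma omul_w_lmul_lmul: "omul w (lmul_lmul u w y) = omul u y"
  using imag_orthonormalD[OF uw] omul_omul_anticommute[of w u "omul w y"]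
    omul_omul_self_imaginary[of w]
  by (simp add: lmul_lmul_def omul_linear_simps)

lemma lmul_lmul_omul_u: "lmul_lmul u w (omul u y) = omul w y"
  using imag_orthonormalD[OF uw] omul_omul_anticommute[of w u y] omul_omul_self_imaginary[of u]
  by (simp add: lmul_lmul_def omul_linear_simps)

lemma lmul_lmul_omul_w: "lmul_lmul u w (omul w y) = - omul u y"
  using imag_orthonormalD[OF uw] by (simp add: lmul_lmul_def omul_omul_self_imaginary omul_linear_simps)

lemma lmul_lmul_omul_orthogonal:
  assumes "r$1 = 0" "inner u r = 0" "inner w r = 0"
  shows "lmul_lmul u w (omul r y) = omul r (lmul_lmul u w y)"
  using imag_orthonormalD[OF uw] omul_omul_anticommute[of w r] omul_omul_anticommute[of u r] assms
  by (simp add: lmul_lmul_def omul_linear_simps)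

end

text \<open>L_u L_w is an orthogonal complex structure, so spin_rotation u w t turns every plane
  span {y, L_u L_w y} through the angle t.\<close>

definition spin_rotation :: "real^8 \<Rightarrow> real^8 \<Rightarrow> real \<Rightarrow> real^8 \<Rightarrow> real^8" where
  "spin_rotation u w t y = cos t *\<^sub>R y + sin t *\<^sub>R lmul_lmul u w y"

definition plane_rotation :: "real^8 \<Rightarrow> real^8 \<Rightarrow> real \<Rightarrow> real^8 \<Rightarrow> real^8" where
  "plane_rotation u w t x = x + (cos t - 1) *\<^sub>R (inner u x *\<^sub>R u + inner w x *\<^sub>R w)
      + sin t *\<^sub>R (inner u x *\<^sub>R w - inner w x *\<^sub>R u)"

definition spin_element :: "real^8 \<Rightarrow> real^8 \<Rightarrow> real \<Rightarrow> triple" where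
  "spin_element u w t = (plane_rotation u w (2 * t), spin_rotation u w t, spin_rotation u w t)"

lemma spin_rotation_0 [simp]: "spin_rotation u w 0 y = y"
  by (simp add: spin_rotation_def)

lemma linear_spin_rotation: "linear (spin_rotation u w t)"
  by (rule linearI) (simp_all add: spin_rotation_def lmul_lmul_linear_simps algebra_simps)

lemma linear_plane_rotation: "linear (plane_rotation u w t)"
  by (rule linearI) (simp_all add: plane_rotation_def inner_add_right algebra_simps)

context
  fixes u w :: "real^8"
  assumes uw: "imag_orthonormal u w"
begin

lemma norm_spin_rotation: "norm (spin_rotation u w t y) = norm y"
proof -
  have "inner (spin_rotation u w t y) (spin_rotation u w t y)
      = inner y y"
    using inner_lmul_lmul_self[OF uw, of y] inner_lmul_lmul[OF uw, of y]
    by (simp add: spin_rotation_def inner_add inner_commute algebra_simps)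
      (simp only: mult.assoc[symmetric] distrib_right[symmetric] sin_cos_squared_add3 mult_1)
  then show ?thesis by (simp add: norm_eq_sqrt_inner)
qed

lemma orthogonal_transformation_spin_rotation: "orthogonal_transformation (spin_rotation u w t)"
  using linear_spin_rotation norm_spin_rotation by (simp add: orthogonal_transformation)

lemma spin_rotation_plane:
  assumes "lmul_lmul u w x = y"
  shows "spin_rotation u w s (cos t *\<^sub>R x + sin t *\<^sub>R y) = cos (s + t) *\<^sub>R x + sin (s + t) *\<^sub>R y"
proof -
  have "lmul_lmul u w y = - x" using assms lmul_lmul_lmul_lmul[OF uw, of x] by simp
  then show ?thesis
    using assms by (simp add: spin_rotation_def lmul_lmul_linear_simps cos_add sin_add algebra_simps)
qed

lemma spin_rotation_add: "spin_rotation u w s (spin_rotation u w t y) = spin_rotation u w (s + t) y"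
  using spin_rotation_plane[of y "lmul_lmul u w y" s t] by (simp add: spin_rotation_def)

lemma spin_rotation_SO8: "spin_rotation u w t \<in> SO8"
proof -
  have "spin_rotation u w t = spin_rotation u w (t/2) \<circ> spin_rotation u w (t/2)"
    by (simp add: fun_eq_iff spin_rotation_add)
  then have "det (matrix (spin_rotation u w t)) = 1"
    using det_matrix_compose_self_orthogonal[OF orthogonal_transformation_spin_rotation] by simp
  then show ?thesis using orthogonal_transformation_spin_rotation by (simp add: SO8_def)
qed

lemma omul_plane_rotation_spin_rotation_u:
  "omul (plane_rotation u w (2 * t) u) (spin_rotation u w t y) = spin_rotation u w t (omul u y)"
proof -
  note on = imag_orthonormalD[OF uw]
  have "omul (plane_rotation u w (2 * t) u) (spin_rotation u w t y)
      = omul (cos (2 * t) *\<^sub>R u + sin (2 * t) *\<^sub>R w) (spin_rotation u w t y)"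
    using on by (simp add: plane_rotation_def algebra_simps)
  also have "\<dots> = (cos (2 * t) * cos t + sin (2 * t) * sin t) *\<^sub>R omul u y
      + (sin (2 * t) * cos t - cos (2 * t) * sin t) *\<^sub>R omul w y"
    using omul_u_lmul_lmul[OF uw] omul_w_lmul_lmul[OF uw]
    by (simp add: spin_rotation_def omul_linear_simps algebra_simps)
  finally show ?thesis
    using lmul_lmul_omul_u[OF uw] by (simp add: cos_sin_double_minus spin_rotation_def)
qed

lemma omul_plane_rotation_spin_rotation_w:
  "omul (plane_rotation u w (2 * t) w) (spin_rotation u w t y) = spin_rotation u w t (omul w y)"
proof -
  note on = imag_orthonormalD[OF uw]
  have "omul (plane_rotation u w (2 * t) w) (spin_rotation u w t y)
      = omul (cos (2 * t) *\<^sub>R w - sin (2 * t) *\<^sub>R u) (spin_rotation u w t y)"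
    using on by (simp add: plane_rotation_def algebra_simps)
  also have "\<dots> = (cos (2 * t) * cos t + sin (2 * t) * sin t) *\<^sub>R omul w y
      - (sin (2 * t) * cos t - cos (2 * t) * sin t) *\<^sub>R omul u y"
    using omul_u_lmul_lmul[OF uw] omul_w_lmul_lmul[OF uw]
    by (simp add: spin_rotation_def omul_linear_simps algebra_simps)
  finally show ?thesis
    using lmul_lmul_omul_w[OF uw] by (simp add: cos_sin_double_minus spin_rotation_def)
qed

lemma omul_plane_rotation_spin_rotation_orthogonal:
  assumes "r$1 = 0" "inner u r = 0" "inner w r = 0"
  shows "omul (plane_rotation u w t r) (spin_rotation u w s y) = spin_rotation u w s (omul r y)"
  using assms lmul_lmul_omul_orthogonal[OF uw assms]
  by (simp add: plane_rotation_def spin_rotation_def omul_linear_simps)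

text \<open>The triality relation; both sides are linear in x, so it suffices to check it on 1, u, w
  and on the imaginary vectors orthogonal to u and w.\<close>
lemma omul_plane_rotation_spin_rotation:
  "omul (plane_rotation u w (2 * t) x) (spin_rotation u w t y) = spin_rotation u w t (omul x y)"
proof -
  note on = imag_orthonormalD[OF uw]
  let ?A = "plane_rotation u w (2 * t)" and ?B = "spin_rotation u w t"
  define r where "r = x - x$1 *\<^sub>R oone - inner u x *\<^sub>R u - inner w x *\<^sub>R w"
  have x_decomp: "x = x$1 *\<^sub>R oone + inner u x *\<^sub>R u + inner w x *\<^sub>R w + r"
    by (simp add: r_def)
  have r: "r$1 = 0" "inner u r = 0" "inner w r = 0"
    using on by (simp_all add: r_def inner_diff_right)
  have on_oone: "omul (?A oone) (?B y) = ?B (omul oone y)"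
    using on by (simp add: plane_rotation_def)
  have "omul (?A x) (?B y) = x$1 *\<^sub>R omul (?A oone) (?B y) + inner u x *\<^sub>R omul (?A u) (?B y)
      + inner w x *\<^sub>R omul (?A w) (?B y) + omul (?A r) (?B y)"
    by (subst x_decomp) (simp only: linear_add[OF linear_plane_rotation]
        linear_scale[OF linear_plane_rotation] omul_add_left omul_scaleR_left)
  also have "\<dots> = ?B (omul x y)"
    by (subst (2) x_decomp) (simp only: on_oone omul_plane_rotation_spin_rotation_u
        omul_plane_rotation_spin_rotation_w omul_plane_rotation_spin_rotation_orthogonal[OF r]
        omul_add_left omul_scaleR_left
        linear_add[OF linear_spin_rotation] linear_scale[OF linear_spin_rotation])
  finally show ?thesis .
qed

lemma norm_plane_rotation: "norm (plane_rotation u w t x) = norm x"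
proof -
  have "omul (plane_rotation u w t x) (spin_rotation u w (t/2) oone) = spin_rotation u w (t/2) x"
    using omul_plane_rotation_spin_rotation[of "t/2" x oone] by simp
  then have "norm (plane_rotation u w t x) * norm (spin_rotation u w (t/2) oone)
      = norm (spin_rotation u w (t/2) x)"
    by (metis norm_omul)
  then show ?thesis by (simp add: norm_spin_rotation)
qed

lemma orthogonal_transformation_plane_rotation: "orthogonal_transformation (plane_rotation u w t)"
  using linear_plane_rotation norm_plane_rotation by (simp add: orthogonal_transformation)

lemma plane_rotation_add:
  "plane_rotation u w s (plane_rotation u w t x) = plane_rotation u w (s + t) x"
proof -
  have triality: "omul (plane_rotation u w \<theta> x) (spin_rotation u w (\<theta>/2) y)
      = spin_rotation u w (\<theta>/2) (omul x y)" for \<theta> x y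
    using omul_plane_rotation_spin_rotation[of "\<theta>/2" x y] by simp
  let ?e = "spin_rotation u w (s/2 + t/2) oone"
  have "omul (plane_rotation u w s (plane_rotation u w t x)) ?e
      = spin_rotation u w (s/2) (omul (plane_rotation u w t x) (spin_rotation u w (t/2) oone))"
    using triality[of s "plane_rotation u w t x" "spin_rotation u w (t/2) oone"]
    by (simp add: spin_rotation_add)
  also have "\<dots> = omul (plane_rotation u w (s + t) x) ?e"
    using triality[of t x oone] triality[of "s + t" x oone]
    by (simp add: spin_rotation_add add_divide_distrib)
  finally have "norm (plane_rotation u w s (plane_rotation u w t x)
      - plane_rotation u w (s + t) x) * norm ?e = 0"
    by (simp add: norm_omul[symmetric] omul_diff_left)
  then show ?thesis by (simp add: norm_spin_rotation)
qed

lemma plane_rotation_SO8: "plane_rotation u w t \<in> SO8"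
proof -
  have "plane_rotation u w t = plane_rotation u w (t/2) \<circ> plane_rotation u w (t/2)"
    by (simp add: fun_eq_iff plane_rotation_add)
  then have "det (matrix (plane_rotation u w t)) = 1"
    using det_matrix_compose_self_orthogonal[OF orthogonal_transformation_plane_rotation] by simp
  then show ?thesis using orthogonal_transformation_plane_rotation by (simp add: SO8_def)
qed

lemma spin_element_Spin7: "spin_element u w t \<in> Spin7"
  using plane_rotation_SO8 spin_rotation_SO8 omul_plane_rotation_spin_rotation
  by (simp add: spin_element_def Spin7_def Spin8_def)

end

lemma spin7_act_spin_element: "spin7_act (spin_element u w t) = spin_rotation u w t"
  by (simp add: spin7_act_def spin_element_def fun_eq_iff)

lemma SO8_compose: "A \<in> SO8 \<Longrightarrow> B \<in> SO8 \<Longrightarrow> A \<circ> B \<in> SO8"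
  by (simp add: SO8_def orthogonal_transformation_compose orthogonal_transformation_linear
      matrix_compose det_mul)

lemma Spin7_tcomp: "g \<in> Spin7 \<Longrightarrow> h \<in> Spin7 \<Longrightarrow> tcomp g h \<in> Spin7"
  by (auto simp: Spin7_def Spin8_def tcomp_def SO8_compose)

lemma spin7_act_tcomp: "spin7_act (tcomp g h) x = spin7_act g (spin7_act h x)"
  by (simp add: spin7_act_def tcomp_def split: prod.split)

lemma TS7_nz_oone_axis2: "(oone, axis 2 1) \<in> TS7_nz"
  by (simp add: TS7_nz_def TS7_def S7_def, simp add: axis_def)

text \<open>Take an imaginary unit z orthogonal to 1, v, w and v w, and u' = - (v w) z.\<close>
lemma imag_orthonormal_companion:
  assumes vw: "imag_orthonormal v w"
  obtains u' z where "imag_orthonormal u' z" "lmul_lmul u' z oone = omul v w"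
    "lmul_lmul u' z v = - w"
proof -
  note on = imag_orthonormalD[OF vw]
  define q where "q = omul v w"
  have q: "q$1 = 0" "inner q q = 1"
    using omul_imaginary_real_part[OF on(1,5)] inner_omul_unit_imaginary[OF on(1,3)] on(4)
    by (simp_all add: q_def)
  obtain z where z: "norm z = 1" "\<And>s. s \<in> {oone, v, w, q} \<Longrightarrow> inner z s = 0"
    by (rule ex_unit_orthogonal[of "{oone, v, w, q}"]) (auto simp: card_insert_if)
  have zz: "z$1 = 0" "inner z z = 1" using z(2)[of oone] z(1) by (simp_all add: dot_square_norm)
  define u' where "u' = - omul q z"
  have u'z: "imag_orthonormal u' z" and J'_oone: "lmul_lmul u' z oone = q"
    using imag_orthonormal_factor[OF q zz] z(2) by (simp_all add: u'_def lmul_lmul_def)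
  have "omul q v = w"
    using omul_anticommute[OF on(1,2,5)] omul_omul_self_imaginary_right[OF on(1,3)]
    by (simp add: q_def omul_linear_simps)
  then have "inner u' v = 0" "inner u' w = 0"
    using inner_omul_imaginary[OF q(1), of z v] inner_omul_imaginary[OF q(1), of z w]
      omul_omul_self_imaginary_right[OF on(2,4), of v] z(2)
    by (auto simp: u'_def q_def)
  moreover have "omul v q = - w" using omul_omul_self_imaginary[OF on(1,3)] by (simp add: q_def)
  ultimately have "lmul_lmul u' z v = - w"
    using lmul_lmul_omul_orthogonal[OF u'z, of v oone] on(1) z(2) J'_oone
    by (simp add: inner_commute)
  then show ?thesis using that[OF u'z] J'_oone by (simp add: q_def)
qed

text \<open>Write e_2 = cos 2t v + sin 2t w. The spin rotation through t for (u', z) moves 1 to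
  cos t 1 + sin t v w and e_2 to cos t v + sin t w, and the one through -t for (v, w) brings
  these back to 1 and v.\<close>
lemma Spin7_transitive_tangent_at_oone:
  assumes "v$1 = 0" "norm v = 1"
  obtains g where "g \<in> Spin7" "spin7_act g oone = oone" "spin7_act g (axis 2 1) = v"
proof -
  obtain w T where w: "norm w = 1" "inner w v = 0" "inner w oone = 0"
    and e2: "axis 2 1 = cos T *\<^sub>R v + sin T *\<^sub>R w"
    using unit_vector_decompose[of "axis 2 1" v oone] assms TS7_nz_oone_axis2
    by (auto simp: TS7_nz_def TS7_def inner_commute)
  have vw: "imag_orthonormal v w"
    using assms w by (simp add: imag_orthonormal_def inner_commute dot_square_norm)
  obtain u' z where u'z: "imag_orthonormal u' z"
    and J'_oone: "lmul_lmul u' z oone = omul v w" and J'_v: "lmul_lmul u' z v = - w"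
    using imag_orthonormal_companion[OF vw] .
  have J_oone: "lmul_lmul v w oone = omul v w" by (simp add: lmul_lmul_def)
  define t where "t = T / 2"
  define g where "g = tcomp (spin_element v w (- t)) (spin_element u' z t)"
  have "spin7_act g oone = spin_rotation v w (- t) (cos t *\<^sub>R oone + sin t *\<^sub>R omul v w)"
    using spin_rotation_plane[OF u'z J'_oone, of t 0]
    by (simp add: g_def spin7_act_tcomp spin7_act_spin_element)
  also have "\<dots> = oone" using spin_rotation_plane[OF vw J_oone, of "- t" t] by simp
  finally have g_oone: "spin7_act g oone = oone" .
  have "axis 2 1 = cos (- T) *\<^sub>R v + sin (- T) *\<^sub>R (- w)" using e2 by simp
  then have "spin7_act g (axis 2 1) = spin_rotation v w (- t) (cos t *\<^sub>R v + sin t *\<^sub>R w)"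
    using spin_rotation_plane[OF u'z J'_v, of t "- T"]
    by (simp add: g_def t_def spin7_act_tcomp spin7_act_spin_element)
  also have "\<dots> = v" using spin_rotation_plane[OF vw lmul_lmul_u[OF vw], of "- t" t] by simp
  finally have "spin7_act g (axis 2 1) = v" .
  moreover have "g \<in> Spin7" using Spin7_tcomp spin_element_Spin7 u'z vw by (simp add: g_def)
  ultimately show ?thesis using that g_oone by blast
qed

lemma Spin7_transitive_S7:
  assumes "norm p = 1"
  obtains u w t where "imag_orthonormal u w" "spin_rotation u w t oone = p"
proof -
  obtain q t where q: "norm q = 1" "inner q oone = 0" and p: "p = cos t *\<^sub>R oone + sin t *\<^sub>R q"
    using unit_vector_decompose[of p oone 0] assms by auto
  have qq: "q$1 = 0" "inner q q = 1" using q by (simp_all add: dot_square_norm)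
  obtain z where z: "norm z = 1" "\<And>s. s \<in> {oone, q} \<Longrightarrow> inner z s = 0"
    by (rule ex_unit_orthogonal[of "{oone, q}"]) (auto simp: card_insert_if)
  have zz: "z$1 = 0" "inner z z = 1" using z(2)[of oone] z(1) by (simp_all add: dot_square_norm)
  note factor = imag_orthonormal_factor[OF qq zz]
  have "spin_rotation (- omul q z) z t oone = p"
    using factor(2) z(2) by (simp add: spin_rotation_def lmul_lmul_def p)
  then show ?thesis using that factor(1) z(2) by simp
qed

lemma Spin7_transitive_unit_tangent:
  assumes "(p, v) \<in> TS7" "norm v = 1"
  obtains g where "g \<in> Spin7" "spin7_act g oone = p" "spin7_act g (axis 2 1) = v"
proof -
  have "norm p = 1" using assms(1) by (simp add: TS7_def S7_def)
  then obtain u w t where uw: "imag_orthonormal u w" and p: "spin_rotation u w t oone = p"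
    by (rule Spin7_transitive_S7)
  define v' where "v' = spin_rotation u w (- t) v"
  have v: "spin_rotation u w t v' = v" by (simp add: v'_def spin_rotation_add[OF uw])
  have "v'$1 = inner (spin_rotation u w t oone) (spin_rotation u w t v')"
    using orthogonal_transformation_spin_rotation[OF uw] by (simp add: orthogonal_transformation_def)
  then have "v'$1 = 0" using assms(1) by (simp add: p v TS7_def)
  moreover have "norm v' = 1" using assms(2) by (simp add: v'_def norm_spin_rotation[OF uw])
  ultimately obtain h where h: "h \<in> Spin7" "spin7_act h oone = oone" "spin7_act h (axis 2 1) = v'"
    using Spin7_transitive_tangent_at_oone by blast
  show ?thesis
    using that[of "tcomp (spin_element u w t) h"] h p v spin_element_Spin7[OF uw] Spin7_tcomp
    by (simp add: spin7_act_tcomp spin7_act_spin_element)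
qed

lemma spin7_invariant_unit_tangent:
  assumes "spin7_invariant F" "(p, v) \<in> TS7" "norm v = 1"
  shows "F p v = F oone (axis 2 1)"
proof -
  obtain g where g: "g \<in> Spin7" "spin7_act g oone = p" "spin7_act g (axis 2 1) = v"
    using Spin7_transitive_unit_tangent assms(2,3) .
  have "(oone, axis 2 1) \<in> TS7" using TS7_nz_oone_axis2 by (simp add: TS7_nz_def)
  then show ?thesis using assms(1) g unfolding spin7_invariant_def by fastforce
qed

lemma spin7_invariant_finsler_S7_round:
  assumes "finsler_S7 F" "spin7_invariant F"
  shows "\<exists>c>0. \<forall>(p,v)\<in>TS7. F p v = c * norm v"
proof -
  have pos: "\<forall>(p,v)\<in>TS7_nz. F p v > 0"
    and hom: "\<forall>(p,v)\<in>TS7. \<forall>r>0. F p (r *\<^sub>R v) = r * F p v"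
    using assms(1) unfolding finsler_S7_def by blast+
  have "F oone (axis 2 1) > 0" using pos TS7_nz_oone_axis2 by blast
  moreover have "F p v = F oone (axis 2 1) * norm v" if pv: "(p, v) \<in> TS7" for p v
  proof (cases "v = 0")
    case True
    have "F p (2 *\<^sub>R v) = 2 * F p v" using hom pv by auto
    then show ?thesis using True by simp
  next
    case False
    have unit: "(p, v /\<^sub>R norm v) \<in> TS7" using pv by (simp add: TS7_def)
    have "\<forall>r>0. F p (r *\<^sub>R (v /\<^sub>R norm v)) = r * F p (v /\<^sub>R norm v)"
      using hom unit by blast
    then have "F p v = norm v * F p (v /\<^sub>R norm v)"
      using False by (auto dest: spec[of _ "norm v"])
    then show ?thesis
      using spin7_invariant_unit_tangent[OF assms(2) unit] False by simp
  qed
  ultimately show ?thesis by blast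
qed

theorem mainTheorem5:
  fixes F :: "real^8 \<Rightarrow> real^8 \<Rightarrow> real"
    and X :: triple
  assumes "finsler_S7 F"
    and "spin7_invariant F"
    and "X \<in> Lie_Spin7"
    and "X \<noteq> ((\<lambda>v. 0), (\<lambda>v. 0), (\<lambda>v. 0))"
    and "killing_const_length F (fundamental_field X)"
  shows "\<exists>c>0. \<forall>(p,v)\<in>TS7. F p v = c * norm v"
  using spin7_invariant_finsler_S7_round[OF assms(1,2)] .

end
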